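(* Let $\mathcal{A}\subset\mathcal{B}\subset\mathcal{N}=\{1,\dots,N\}$ and let $\gamma,\ell,\kappa$ satisfy $$\tfrac12<\gamma\le 1,\qquad \ell\in\Big(0,2\cos^{-1}\big(\tfrac1\gamma-1\big)\Big),\qquad \kappa>\kappa_*(\gamma,\ell,D(\Omega_\mathcal{B})):=\frac{D(\Omega_\mathcal{B})}{\gamma\sin\ell-2(1-\gamma)\sin\frac{\ell}{2}}.$$ Let $\Theta$ be a solution of the Kuramoto model such that $\Theta_\mathcal{A}$ is a $\gamma$-ensemble of arclength $\le\ell$ at time $0$; replace each $\theta_i$, $i\in\mathcal{A}$, by its $2\pi$-shift realizing $D(\Theta_\mathcal{A}(0))\le\ell$ (this is again a solution). Then: (1) $\sup_{t\ge0}D(\Theta_\mathcal{A}(t))\le\ell$ and $\limsup_{t\to\infty}D(\Theta_\mathcal{A}(t))\le\phi_1(\gamma,\kappa,D(\Omega_\mathcal{B}))$; (2) $\sup_{t\ge0}D(\Theta_\mathcal{B}(t))<\infty$; (3) if in addition $$\frac{D(\Omega_\mathcal{B})}{\kappa}<\frac{(2\gamma-1)^{3/2}}{\sqrt{2\gamma}}\cdot\frac{2-\gamma}{\sqrt{\gamma/2}+(1-\gamma)},$$ then for $i,j\in\mathcal{A}$: if $\nu_i>\nu_j$, $$\frac{\nu_i-\nu_j}{\kappa}\le\liminf_{t\to\infty}(\theta_i(t)-\theta_j(t))\le\limsup_{t\to\infty}(\theta_i(t)-\theta_j(t))\le\frac{\pi}{2\sqrt2\,(\gamma\cos\phi_1-(1-\gamma))}\cdot\frac{\nu_i-\nu_j}{\kappa},$$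 with $\phi_1=\phi_1(\gamma,\kappa,D(\Omega_\mathcal{B}))$; and if $\nu_i=\nu_j$, then $\lim_{t\to\infty}(\theta_i(t)-\theta_j(t))=0$.
   Context: Kuramoto model: for $N\ge2$, $\Omega=(\nu_1,\dots,\nu_N)\in\mathbb{R}^N$, $\kappa\ge0$, the phases $\Theta(t)=(\theta_1,\dots,\theta_N)\in\mathbb{R}^N$ satisfy $\dot\theta_i=\nu_i+\frac{\kappa}{N}\sum_{j=1}^N\sin(\theta_j-\theta_i)$. For $\mathcal{A}\subset\mathcal{N}=\{1,\dots,N\}$: $\Theta_\mathcal{A}=(\theta_i)_{i\in\mathcal{A}}$, $D(\Theta_\mathcal{A})=\max_{i,j\in\mathcal{A}}|\theta_i-\theta_j|$, $D(\Omega_\mathcal{A})=\max_{i,j\in\mathcal{A}}|\nu_i-\nu_j|$. For $\gamma\in(1/2,1]$: $\Theta_\mathcal{A}$ is a $\gamma$-ensemble if $|\mathcal{A}|/N\ge\gamma$; it is a $\gamma$-ensemble of arclength $\le\ell$ at time $t_0$ if moreover, after replacing some $\theta_i$ ($i\in\mathcal{A}$) by $\theta_i+2\pi m_i$ with $m_i\in\mathbb{Z}$, one has $D(\Theta_\mathcal{A}(t_0))\le\ell$. Let $f(\theta)=\gamma\sin\theta-2(1-\gamma)\sin\frac\theta2$. For $\kappa>0$ with $D(\Omega_\mathcal{B})/\kappa<\max_{[0,2\cos^{-1}((1-\gamma)/\gamma)]}f$, $\phi_1(\gamma,\kappa,D(\Omega_\mathcal{B}))$ denotes the smaller root of $f(\theta)=D(\Omega_\mathcal{B})/\kappa$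 in $[0,2\cos^{-1}\frac{1-\gamma}{\gamma})$. *)

theory Defs
  imports "HOL-Analysis.Analysis"
begin

definition kuramoto_solution ::
  "nat \<Rightarrow> (nat \<Rightarrow> real) \<Rightarrow> real \<Rightarrow> (nat \<Rightarrow> real \<Rightarrow> real) \<Rightarrow> bool" where
  "kuramoto_solution N \<nu> \<kappa> \<theta> \<longleftrightarrow>
     (\<forall>i\<in>{1..N}. \<forall>t\<ge>0.
        ((\<theta> i) has_real_derivative
           (\<nu> i + \<kappa> / real N * (\<Sum>j=1..N. sin (\<theta> j t - \<theta> i t)))) (at t within {0..}))"

definition diam_idx :: "(nat \<Rightarrow> real) \<Rightarrow> nat set \<Rightarrow> real" where
  "diam_idx x A = Max {\<bar>x i - x j\<bar> | i j. i \<in> A \<and> j \<in> A}"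

definition gamma_ensemble :: "nat \<Rightarrow> real \<Rightarrow> nat set \<Rightarrow> bool" where
  "gamma_ensemble N \<gamma> A \<longleftrightarrow> real (card A) / real N \<ge> \<gamma>"

definition f_gamma :: "real \<Rightarrow> real \<Rightarrow> real" where
  "f_gamma \<gamma> \<theta> = \<gamma> * sin \<theta> - 2 * (1 - \<gamma>) * sin (\<theta> / 2)"

definition phi1 :: "real \<Rightarrow> real \<Rightarrow> real \<Rightarrow> real" where
  "phi1 \<gamma> \<kappa> d = Inf {\<theta>. 0 \<le> \<theta> \<and> \<theta> < 2 * arccos ((1 - \<gamma>) / \<gamma>) \<and> f_gamma \<gamma> \<theta> = d / \<kappa>}"

end

theory Submission
  imports Defs
begin

(* If the phases of A lie on an arc of length D \<le> \<pi> whose end points are \<theta>_i and \<theta>_j, the at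
   least \<gamma>N oscillators of A pull \<theta>_i - \<theta>_j together by at least sin D each, while every other
   oscillator pushes it apart by at most 2 sin (D/2); hence (\<theta>_i - \<theta>_j)' \<le> D(\<Omega>_B) - \<kappa> f(D).
   Since \<kappa> f(l) > D(\<Omega>_B), a first-crossing argument shows that the arc of length l is invariant
   and that every oscillator of B stays at bounded distance from A, and concavity of f on
   [\<phi>\<^sub>1, l] gives a uniform decay rate of the diameter down to any level above \<phi>\<^sub>1.
   Afterwards write
     (\<theta>_i - \<theta>_j)' = \<nu>_i - \<nu>_j - (2\<kappa>/N) sin ((\<theta>_i - \<theta>_j)/2) \<Sum>_k cos (\<theta>_k - (\<theta>_i + \<theta>_j)/2).
   Because \<phi>\<^sub>1 < arccos (1/\<gamma> - 1), the cosine sum is eventually at least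
   N (\<gamma> cos \<phi>\<^sub>1 - (1 - \<gamma>)) > 0, which traps \<theta>_i - \<theta>_j between (\<nu>_i - \<nu>_j)/\<kappa> and the
   bound obtained from Jordan's inequality. *)

section \<open>Trigonometric estimates\<close>

lemma sin_add_2pi_int: "sin (x + 2 * pi * real_of_int n) = sin x"
  by (simp add: sin_add)

lemma sin_add_le:
  fixes a b :: real
  assumes "0 \<le> a" "0 \<le> b" "a + b \<le> pi"
  shows "sin (a + b) \<le> sin a + sin b"
proof -
  have "sin a \<ge> 0" "sin b \<ge> 0" using assms by (auto intro!: sin_ge_zero)
  hence "sin a * cos b \<le> sin a" "cos a * sin b \<le> sin b"
    using mult_left_le[of "cos b" "sin a"] mult_left_le[of "cos a" "sin b"] by (auto simp: mult.commute)
  thus ?thesis by (simp add: sin_add)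
qed

lemma sin_diff_minus_sin_le_neg_sin:
  fixes \<delta> D :: real
  assumes "0 \<le> \<delta>" "\<delta> \<le> D" "D \<le> pi"
  shows "sin (\<delta> - D) - sin \<delta> \<le> - sin D"
proof -
  have "sin ((D - \<delta>) + \<delta>) \<le> sin (D - \<delta>) + sin \<delta>" using assms by (intro sin_add_le) auto
  moreover have "sin (\<delta> - D) = - sin (D - \<delta>)" by (metis minus_diff_eq sin_minus)
  ultimately show ?thesis by simp
qed

lemma sin_diff_minus_sin_le:
  fixes y D :: real
  assumes "0 \<le> D" "D \<le> 2 * pi"
  shows "sin (y - D) - sin y \<le> 2 * sin (D / 2)"
proof -
  have "sin (D/2) \<ge> 0" using assms by (intro sin_ge_zero) auto
  moreover have "sin (y - D) - sin y = - (2 * sin (D/2) * cos ((y - D + y) / 2))"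
    by (simp add: sin_diff_sin)
  ultimately show ?thesis
    using mult_left_mono[of "- cos ((y - D + y) / 2)" 1 "sin (D/2)"] by (simp add: abs_le_iff)
qed

text \<open>Each oscillator of \<open>A\<close> contributes at most \<open>-sin D\<close>, every other one at most
  \<open>2 sin (D/2)\<close>; this is where \<open>f_gamma\<close> comes from.\<close>
lemma sum_sin_diff_minus_sin_le:
  fixes \<delta> :: "nat \<Rightarrow> real" and D \<gamma> :: real
  assumes A: "A \<subseteq> {1..N}" and D: "0 \<le> D" "D \<le> pi"
    and \<delta>: "\<And>k. k \<in> A \<Longrightarrow> 0 \<le> \<delta> k \<and> \<delta> k \<le> D"
    and card: "\<gamma> * real N \<le> real (card A)"
  shows "(\<Sum>k=1..N. sin (\<delta> k - D) - sin (\<delta> k)) \<le> - real N * f_gamma \<gamma> D"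
proof -
  have fin: "finite {1..N}" by simp
  have cA: "card ({1..N} - A) = N - card A" "card A \<le> N"
    using A card_mono[OF fin A] by (auto simp: card_Diff_subset finite_subset)
  have sD: "0 \<le> sin D + 2 * sin (D/2)" using D by (auto intro!: add_nonneg_nonneg sin_ge_zero)
  have "(\<Sum>k=1..N. sin (\<delta> k - D) - sin (\<delta> k)) =
     (\<Sum>k\<in>A. sin (\<delta> k - D) - sin (\<delta> k)) + (\<Sum>k\<in>{1..N}-A. sin (\<delta> k - D) - sin (\<delta> k))"
    by (subst sum.subset_diff[OF A fin]) (simp add: add.commute)
  also have "\<dots> \<le> (\<Sum>k\<in>A. - sin D) + (\<Sum>k\<in>{1..N}-A. 2 * sin (D/2))"
    using \<delta> D by (intro add_mono sum_mono sin_diff_minus_sin_le_neg_sin sin_diff_minus_sin_le) auto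
  also have "\<dots> = - real (card A) * (sin D + 2 * sin (D/2)) + real N * (2 * sin (D/2))"
    using cA by (simp add: of_nat_diff algebra_simps)
  also have "\<dots> \<le> - (\<gamma> * real N) * (sin D + 2 * sin (D/2)) + real N * (2 * sin (D/2))"
    using mult_right_mono[OF card sD] by simp
  also have "\<dots> = - real N * f_gamma \<gamma> D"
    unfolding f_gamma_def by (simp add: algebra_simps)
  finally show ?thesis .
qed

lemma cos_diff_le_abs: "cos (x::real) - cos y \<le> \<bar>x - y\<bar>"
proof -
  have "cos x - cos y = 2 * sin ((x + y) / 2) * sin ((y - x) / 2)" by (rule cos_diff_cos)
  also have "\<dots> \<le> \<bar>2 * sin ((x + y) / 2) * sin ((y - x) / 2)\<bar>" by simp
  also have "\<dots> \<le> 2 * 1 * \<bar>(y - x) / 2\<bar>"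
    unfolding abs_mult by (intro mult_mono abs_sin_x_le_abs_x) auto
  finally show ?thesis by simp
qed

lemma sin_ge_chord_pi4:
  fixes z :: real
  assumes "0 \<le> z" "z \<le> pi/4"
  shows "2 * sqrt 2 / pi * z \<le> sin z"
proof -
  have "concave_on {0..pi/4} sin"
    by (rule f''_le0_imp_concave[where f' = cos and f'' = "\<lambda>x. - sin x"])
       (auto intro!: derivative_eq_intros sin_ge_zero)
  from concave_onD_Icc'[OF this, of z] assms
  have "sin z \<ge> (sin (pi/4) - sin 0) / (pi/4 - 0) * (z - 0) + sin 0" by simp
  thus ?thesis by (simp add: sin_45 field_simps)
qed

section \<open>The function \<open>f_gamma\<close> and its root \<open>phi1\<close>\<close>

lemma arccos_inv_minus_one:
  fixes \<gamma> :: real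
  assumes "1/2 < \<gamma>" "\<gamma> \<le> 1"
  shows "0 < arccos (1/\<gamma> - 1)" "arccos (1/\<gamma> - 1) \<le> pi/2"
    and "\<gamma> * cos (arccos (1/\<gamma> - 1)) = 1 - \<gamma>"
proof -
  have c: "0 \<le> 1/\<gamma> - 1" "1/\<gamma> - 1 < 1" using assms by (auto simp: field_simps)
  thus "0 < arccos (1/\<gamma> - 1)" "arccos (1/\<gamma> - 1) \<le> pi/2"
    using arccos_lt_bounded[of "1/\<gamma> - 1"] arccos_le_pi2[of "1/\<gamma> - 1"] assms by auto
  show "\<gamma> * cos (arccos (1/\<gamma> - 1)) = 1 - \<gamma>" using c assms by (simp add: field_simps)
qed

lemma f_gamma_half_angle: "f_gamma \<gamma> \<theta> = 2 * sin (\<theta>/2) * (\<gamma> * cos (\<theta>/2) - (1 - \<gamma>))"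
  using sin_double[of "\<theta>/2"] unfolding f_gamma_def by (simp add: algebra_simps)

lemma f_gamma_pos:
  assumes \<gamma>: "1/2 < \<gamma>" "\<gamma> \<le> 1" and x: "0 < x" "x < 2 * arccos (1/\<gamma> - 1)"
  shows "0 < f_gamma \<gamma> x"
proof -
  note c = arccos_inv_minus_one[OF \<gamma>]
  have "sin (x/2) > 0" using x c by (intro sin_gt_zero) auto
  moreover have "cos (arccos (1/\<gamma> - 1)) < cos (x/2)" using x c by (intro cos_monotone_0_pi) auto
  hence "\<gamma> * cos (x/2) - (1 - \<gamma>) > 0" using mult_strict_left_mono[of _ _ \<gamma>] \<gamma> c(3) by fastforce
  ultimately show ?thesis unfolding f_gamma_half_angle by simp
qed

lemma concave_on_f_gamma:
  assumes \<gamma>: "1/2 < \<gamma>" "\<gamma> \<le> 1"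
  shows "concave_on {0..2 * arccos (1/\<gamma> - 1)} (f_gamma \<gamma>)"
proof (rule f''_le0_imp_concave[where f' = "\<lambda>x. \<gamma> * cos x - (1 - \<gamma>) * cos (x/2)"
      and f'' = "\<lambda>x. - \<gamma> * sin x + (1 - \<gamma>) / 2 * sin (x/2)"])
  fix x :: real
  show "(f_gamma \<gamma> has_real_derivative \<gamma> * cos x - (1 - \<gamma>) * cos (x/2)) (at x)"
    unfolding f_gamma_def[abs_def] by (auto intro!: derivative_eq_intros)
  show "((\<lambda>x. \<gamma> * cos x - (1 - \<gamma>) * cos (x/2)) has_real_derivative
      - \<gamma> * sin x + (1 - \<gamma>) / 2 * sin (x/2)) (at x)"
    by (auto intro!: derivative_eq_intros)
next
  fix x assume x: "x \<in> {0..2 * arccos (1/\<gamma> - 1)}"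
  note c = arccos_inv_minus_one[OF \<gamma>]
  have sx: "sin (x/2) \<ge> 0" using x c by (intro sin_ge_zero) auto
  have "cos (x/2) \<ge> cos (arccos (1/\<gamma> - 1))" using x c by (intro cos_monotone_0_pi_le) auto
  hence "\<gamma> * cos (x/2) \<ge> 1 - \<gamma>" using mult_left_mono[of _ _ \<gamma>] \<gamma> c(3) by fastforce
  hence "sin (x/2) * ((1 - \<gamma>) / 2 - 2 * \<gamma> * cos (x/2)) \<le> 0"
    using \<gamma> sx by (intro mult_nonneg_nonpos) auto
  moreover have "sin x = 2 * sin (x/2) * cos (x/2)" using sin_double[of "x/2"] by simp
  ultimately show "- \<gamma> * sin x + (1 - \<gamma>) / 2 * sin (x/2) \<le> 0" by (simp add: algebra_simps)
qed (rule convex_real_interval)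

lemma f_gamma_arccos:
  fixes \<gamma> :: real
  assumes \<gamma>: "1/2 < \<gamma>" "\<gamma> \<le> 1"
  shows "f_gamma \<gamma> (arccos (1/\<gamma> - 1)) = (2 * \<gamma> - 1) powr (3/2) / sqrt (2 * \<gamma>)
                              * ((2 - \<gamma>) / (sqrt (\<gamma> / 2) + (1 - \<gamma>)))"
proof -
  define \<theta> where "\<theta> = arccos (1/\<gamma> - 1)"
  note th = arccos_inv_minus_one[OF \<gamma>, folded \<theta>_def]
  define q where "q = sqrt (2 * \<gamma>)"
  have q: "q > 0" "q^2 = 2 * \<gamma>" using \<gamma> by (auto simp: q_def)
  define s where "s = sqrt (2 * \<gamma> - 1)"
  have s: "s > 0" "s^2 = 2 * \<gamma> - 1" using \<gamma> by (auto simp: s_def)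
  have "cos (\<theta>/2) ^ 2 = (1 + cos \<theta>) / 2" using cos_double_cos[of "\<theta>/2"] by simp
  also have "\<dots> = (1/q)^2" using th(3) q \<gamma> by (simp add: power_divide field_simps)
  finally have "cos (\<theta>/2) ^ 2 = (1/q)^2" .
  moreover have "cos (\<theta>/2) \<ge> 0" using th by (intro cos_ge_zero) auto
  ultimately have co: "cos (\<theta>/2) = 1 / q" using q by (simp add: power2_eq_iff_nonneg)
  have "sin (\<theta>/2) ^ 2 = (s/q)^2"
    using sin_squared_eq[of "\<theta>/2"] co q s \<gamma> by (simp add: power_divide field_simps)
  moreover have "sin (\<theta>/2) \<ge> 0" using th by (intro sin_ge_zero) auto
  ultimately have si: "sin (\<theta>/2) = s / q" using q s by (simp add: power2_eq_iff_nonneg)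
  have p32: "(2 * \<gamma> - 1) powr (3/2) = (2 * \<gamma> - 1) * s"
    using powr_add[of "2 * \<gamma> - 1" 1 "1/2"] \<gamma> by (simp add: powr_half_sqrt s_def)
  have sq2: "sqrt (\<gamma> / 2) = q / 2"
    using real_sqrt_divide[of "2 * \<gamma>" 4] by (simp add: q_def)
  have "(q - 2 * (1 - \<gamma>)) * (q / 2 + (1 - \<gamma>)) = (2 * \<gamma> - 1) * (2 - \<gamma>)"
    using q(2) by (simp add: algebra_simps power2_eq_square)
  moreover have "q / 2 + (1 - \<gamma>) > 0" using q \<gamma> by simp
  ultimately have key: "q - 2 * (1 - \<gamma>) = (2 * \<gamma> - 1) * (2 - \<gamma>) / (q / 2 + (1 - \<gamma>))"
    by (simp add: eq_divide_eq)
  have "f_gamma \<gamma> \<theta> = s / q * (2 * \<gamma> / q - 2 * (1 - \<gamma>))"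
    unfolding f_gamma_half_angle co si using q by (simp add: field_simps)
  also have "2 * \<gamma> / q = q" using q by (simp add: field_simps power2_eq_square)
  finally show ?thesis unfolding key p32 sq2 \<theta>_def[symmetric] q_def[symmetric] by (simp add: mult_ac)
qed

lemma continuous_on_f_gamma: "continuous_on S (f_gamma \<gamma>)"
  unfolding f_gamma_def by (auto intro!: continuous_intros)

lemma phi1_le_root:
  assumes "0 < \<gamma>" "0 \<le> x" "x < 2 * arccos (1/\<gamma> - 1)" "f_gamma \<gamma> x = d / \<kappa>"
  shows "phi1 \<gamma> \<kappa> d \<le> x"
  unfolding phi1_def using assms by (intro cInf_lower) (auto simp: diff_divide_distrib bdd_below_def)

lemma phi1_root:
  assumes \<gamma>: "1/2 < \<gamma>" "\<gamma> \<le> 1" and l: "0 < l" "l < 2 * arccos (1/\<gamma> - 1)"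
    and \<rho>: "0 \<le> d / \<kappa>" "d / \<kappa> < f_gamma \<gamma> l"
  shows "f_gamma \<gamma> (phi1 \<gamma> \<kappa> d) = d / \<kappa>" "0 \<le> phi1 \<gamma> \<kappa> d" "phi1 \<gamma> \<kappa> d < l"
proof -
  define R where "R = {\<theta>. 0 \<le> \<theta> \<and> \<theta> < 2 * arccos ((1 - \<gamma>) / \<gamma>) \<and> f_gamma \<gamma> \<theta> = d / \<kappa>}"
  have phi: "phi1 \<gamma> \<kappa> d = Inf R" by (simp add: phi1_def R_def)
  obtain x where x: "0 \<le> x" "x \<le> l" "f_gamma \<gamma> x = d / \<kappa>"
    using IVT'[of "f_gamma \<gamma>" 0 "d / \<kappa>" l] \<rho> l continuous_on_f_gamma by (auto simp: f_gamma_def)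
  hence "x \<in> R" using l \<gamma> by (auto simp: R_def diff_divide_distrib)
  hence R: "R \<noteq> {}" "bdd_below R" by (auto simp: R_def bdd_below_def)
  have "Inf R \<in> closure R" by (rule closure_contains_Inf[OF R])
  moreover have "closure R \<subseteq> {x. f_gamma \<gamma> x = d / \<kappa>}"
    by (rule closure_minimal) (auto simp: R_def intro!: closed_Collect_eq continuous_on_f_gamma continuous_intros)
  ultimately show root: "f_gamma \<gamma> (phi1 \<gamma> \<kappa> d) = d / \<kappa>" unfolding phi by blast
  show "0 \<le> phi1 \<gamma> \<kappa> d" unfolding phi using R by (intro cInf_greatest) (auto simp: R_def)
  have "phi1 \<gamma> \<kappa> d \<le> l" using phi1_le_root[of \<gamma> x d \<kappa>] x l \<gamma> by simp
  moreover have "phi1 \<gamma> \<kappa> d \<noteq> l" using root \<rho> by auto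
  ultimately show "phi1 \<gamma> \<kappa> d < l" by simp
qed

lemma phi1_lt_arccos:
  assumes \<gamma>: "1/2 < \<gamma>" "\<gamma> \<le> 1"
    and \<rho>: "0 \<le> d / \<kappa>" "d / \<kappa> < f_gamma \<gamma> (arccos (1/\<gamma> - 1))"
  shows "phi1 \<gamma> \<kappa> d < arccos (1/\<gamma> - 1)"
proof -
  note th = arccos_inv_minus_one[OF \<gamma>]
  obtain x where x: "0 \<le> x" "x \<le> arccos (1/\<gamma> - 1)" "f_gamma \<gamma> x = d / \<kappa>"
    using IVT'[of "f_gamma \<gamma>" 0 "d / \<kappa>" "arccos (1/\<gamma> - 1)"] \<rho> th continuous_on_f_gamma
    by (auto simp: f_gamma_def)
  have "phi1 \<gamma> \<kappa> d \<le> x" using phi1_le_root[of \<gamma> x d \<kappa>] x th \<gamma> by simp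
  moreover have "x \<noteq> arccos (1/\<gamma> - 1)" using x \<rho> by auto
  ultimately show ?thesis using x by simp
qed

section \<open>A comparison principle and eventual bounds\<close>

lemma eventually_at_right_nonpos:
  fixes g :: "real \<Rightarrow> real"
  assumes dg: "(g has_real_derivative g') (at s within {T..})" and s: "T \<le> s"
    and nonpos: "g s \<le> 0" and strict: "g s = 0 \<Longrightarrow> g' < 0"
  shows "eventually (\<lambda>u. g u \<le> 0) (at_right s)"
proof (cases "g s = 0")
  case True
  from has_real_derivative_neg_dec_right[OF dg strict[OF True]]
  obtain d where d: "d > 0" "\<And>h. h > 0 \<Longrightarrow> s + h \<in> {T..} \<Longrightarrow> h < d \<Longrightarrow> g (s + h) < g s"
    by blast
  show ?thesis
    unfolding eventually_at_right_field
  proof (intro exI[of _ "s + d"] conjI allI impI)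
    fix u assume "s < u" "u < s + d"
    thus "g u \<le> 0" using d(2)[of "u - s"] s True by auto
  qed (use d in simp)
next
  case False
  have "(g \<longlongrightarrow> g s) (at_right s)"
    by (rule tendsto_within_subset[OF DERIV_continuous[OF dg, unfolded continuous_within]])
      (use s in auto)
  moreover have "g s < 0" using False nonpos by simp
  ultimately show ?thesis by (auto dest: order_tendstoD(2) elim!: eventually_mono)
qed

lemma continuous_within_left_le:
  fixes g :: "real \<Rightarrow> real"
  assumes cont: "continuous (at s within {T..}) g" and Ts: "T < s"
    and le: "\<And>u. T \<le> u \<Longrightarrow> u < s \<Longrightarrow> g u \<le> c"
  shows "g s \<le> c"
proof -
  have "(g \<longlongrightarrow> g s) (at s within {T..s})"
    by (rule tendsto_within_subset[OF cont[unfolded continuous_within]]) auto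
  hence "(g \<longlongrightarrow> g s) (at_left s)" by (simp only: at_within_Icc_at_left[OF Ts])
  moreover have "eventually (\<lambda>u. g u \<le> c) (at_left s)"
    unfolding eventually_at_left_field using Ts le by (intro exI[of _ T]) auto
  ultimately show ?thesis by (rule tendsto_upperbound) simp
qed

lemma barrier_le:
  fixes h h' :: "'p \<Rightarrow> real \<Rightarrow> real" and \<beta> \<beta>' :: "real \<Rightarrow> real"
  assumes fin: "finite P"
    and dh: "\<And>p t. p \<in> P \<Longrightarrow> t \<ge> T \<Longrightarrow> (h p has_real_derivative h' p t) (at t within {T..})"
    and d\<beta>: "\<And>t. t \<ge> T \<Longrightarrow> (\<beta> has_real_derivative \<beta>' t) (at t within {T..})"
    and touch: "\<And>p t. p \<in> P \<Longrightarrow> t \<ge> T \<Longrightarrow> h p t = \<beta> t \<Longrightarrow> \<forall>q\<in>P. h q t \<le> \<beta> t \<Longrightarrow> h' p t < \<beta>' t"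
    and init: "\<And>q. q \<in> P \<Longrightarrow> h q T \<le> \<beta> T"
    and q: "q \<in> P" and t1: "T \<le> t1"
  shows "h q t1 \<le> \<beta> t1"
proof (rule ccontr)
  assume above: "\<not> h q t1 \<le> \<beta> t1"
  define g where "g p u = h p u - \<beta> u" for p u
  have dg: "(g p has_real_derivative (h' p t - \<beta>' t)) (at t within {T..})" if "p \<in> P" "t \<ge> T" for p t
    unfolding g_def[abs_def] using dh[OF that] d\<beta>[OF that(2)] by (intro derivative_intros)
  define S where "S = {s. T \<le> s \<and> s \<le> t1 \<and> (\<forall>u\<in>{T..s}. \<forall>p\<in>P. g p u \<le> 0)}"
  define s0 where "s0 = Sup S"
  have TS: "T \<in> S" using init t1 by (auto simp: S_def g_def)
  have bdd: "bdd_above S" by (auto simp: S_def bdd_above_def)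
  have s0: "T \<le> s0" "s0 \<le> t1"
    using TS bdd unfolding s0_def by (auto intro!: cSup_upper cSup_least simp: S_def)
  have below: "g p u \<le> 0" if "p \<in> P" "T \<le> u" "u < s0" for p u
  proof -
    obtain s where "s \<in> S" "u < s" using \<open>u < s0\<close> TS bdd less_cSup_iff[of S u] unfolding s0_def by blast
    thus ?thesis using that by (auto simp: S_def)
  qed
  have at_s0: "g p s0 \<le> 0" if p: "p \<in> P" for p
  proof (cases "s0 = T")
    case True thus ?thesis using init p by (simp add: g_def)
  next
    case False
    hence "T < s0" using s0(1) by simp
    thus ?thesis by (rule continuous_within_left_le[OF DERIV_continuous[OF dg[OF p s0(1)]] _ below[OF p]])
  qed
  have "s0 < t1" using at_s0[OF q] above s0(2) by (cases "s0 = t1") (auto simp: g_def)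
  have "eventually (\<lambda>u. g p u \<le> 0) (at_right s0)" if p: "p \<in> P" for p
  proof (rule eventually_at_right_nonpos[OF dg[OF p s0(1)] s0(1) at_s0[OF p]])
    assume "g p s0 = 0"
    thus "h' p s0 - \<beta>' s0 < 0" using touch[OF p s0(1)] at_s0 by (simp add: g_def)
  qed
  hence "eventually (\<lambda>u. \<forall>p\<in>P. g p u \<le> 0) (at_right s0)"
    by (rule eventually_ball_finite[OF fin, rule_format])
  moreover have "eventually (\<lambda>u. u < t1) (at_right s0)"
    using \<open>s0 < t1\<close> unfolding eventually_at_right_field by blast
  ultimately have "eventually (\<lambda>u. (\<forall>p\<in>P. g p u \<le> 0) \<and> u < t1) (at_right s0)"
    by (rule eventually_conj)
  then obtain b where b: "b > s0" "\<And>u. s0 < u \<Longrightarrow> u < b \<Longrightarrow> (\<forall>p\<in>P. g p u \<le> 0) \<and> u < t1"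
    unfolding eventually_at_right_field by blast
  have "(s0 + b) / 2 \<in> S"
    unfolding S_def
  proof (intro CollectI conjI ballI)
    show "T \<le> (s0 + b) / 2" "(s0 + b) / 2 \<le> t1" using s0 b(1) b(2)[of "(s0 + b) / 2"] by auto
    fix u p assume u: "u \<in> {T..(s0 + b) / 2}" and p: "p \<in> P"
    consider "u < s0" | "u = s0" | "s0 < u" "u < b" using u b(1) by fastforce
    thus "g p u \<le> 0" using below[OF p] at_s0[OF p] b(2) p u by cases auto
  qed
  hence "(s0 + b) / 2 \<le> s0" unfolding s0_def using bdd by (rule cSup_upper)
  thus False using b(1) by simp
qed

lemma barrier_exp_decay:
  fixes h h' :: "'p \<Rightarrow> real \<Rightarrow> real"
  assumes fin: "finite P"
    and dh: "\<And>p t. p \<in> P \<Longrightarrow> t \<ge> T \<Longrightarrow> (h p has_real_derivative h' p t) (at t within {T..})"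
    and aU: "a < U" and C: "C > 0"
    and decr: "\<And>p t. p \<in> P \<Longrightarrow> t \<ge> T \<Longrightarrow> \<forall>q\<in>P. h q t \<le> h p t \<Longrightarrow> a \<le> h p t \<Longrightarrow> h p t \<le> U
      \<Longrightarrow> h' p t \<le> - C"
    and init: "\<And>q. q \<in> P \<Longrightarrow> h q T \<le> U"
    and q: "q \<in> P" and t: "T \<le> t"
  shows "h q t \<le> a + (U - a) * exp (- (C / (2 * (U - a))) * (t - T))"
proof -
  define c where "c = C / (2 * (U - a))"
  have c: "c > 0" "(U - a) * c = C / 2" using aU C by (auto simp: c_def divide_simps)
  define \<beta> where "\<beta> t = a + (U - a) * exp (- c * (t - T))" for t
  define \<beta>' where "\<beta>' t = - c * (U - a) * exp (- c * (t - T))" for t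
  have "h q t \<le> \<beta> t"
  proof (rule barrier_le[OF fin dh _ _ _ q t])
    show "(\<beta> has_real_derivative \<beta>' s) (at s within {T..})" for s
      unfolding \<beta>_def[abs_def] \<beta>'_def by (auto intro!: derivative_eq_intros)
  next
    fix p s assume p: "p \<in> P" and s: "T \<le> s" and eq: "h p s = \<beta> s" and all: "\<forall>q\<in>P. h q s \<le> \<beta> s"
    have e: "exp (- c * (s - T)) \<le> 1" using c s by auto
    have "0 \<le> (U - a) * exp (- c * (s - T))" "(U - a) * exp (- c * (s - T)) \<le> U - a"
      using aU mult_left_le[OF e, of "U - a"] by auto
    hence "a \<le> h p s" "h p s \<le> U" using eq unfolding \<beta>_def by linarith+
    hence "h' p s \<le> - C" using decr[OF p s] all eq by auto
    moreover have "c * (U - a) * exp (- c * (s - T)) \<le> c * (U - a)"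
      by (rule mult_left_le[OF e]) (use c aU in simp)
    hence "- C / 2 \<le> \<beta>' s" using c(2) unfolding \<beta>'_def by (simp add: mult.commute)
    ultimately show "h' p s < \<beta>' s" using C by linarith
  next
    fix q assume "q \<in> P"
    thus "h q T \<le> \<beta> T" using init by (simp add: \<beta>_def)
  qed
  thus ?thesis by (simp add: \<beta>_def c_def)
qed

lemma eventually_le_of_decay:
  fixes h h' :: "'p \<Rightarrow> real \<Rightarrow> real"
  assumes fin: "finite P"
    and dh: "\<And>p t. p \<in> P \<Longrightarrow> t \<ge> T \<Longrightarrow> (h p has_real_derivative h' p t) (at t within {T..})"
    and aU: "a < U" and C: "C > 0"
    and decr: "\<And>p t. p \<in> P \<Longrightarrow> t \<ge> T \<Longrightarrow> \<forall>q\<in>P. h q t \<le> h p t \<Longrightarrow> a \<le> h p t \<Longrightarrow> h p t \<le> U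
      \<Longrightarrow> h' p t \<le> - C"
    and init: "\<And>q. q \<in> P \<Longrightarrow> h q T \<le> U"
    and \<eta>: "\<eta> > 0"
  shows "eventually (\<lambda>t. \<forall>q\<in>P. h q t \<le> a + \<eta>) at_top"
proof -
  define c where "c = C / (2 * (U - a))"
  have c: "c > 0" using aU C by (simp add: c_def)
  have "eventually (\<lambda>t. (U - a) * exp (- c * (t - T)) < \<eta>) at_top"
  proof (rule eventually_mono[OF eventually_gt_at_top[of "T - ln (\<eta> / (U - a)) / c"]])
    fix t assume "T - ln (\<eta> / (U - a)) / c < t"
    hence "T - t < ln (\<eta> / (U - a)) / c" by linarith
    hence "(T - t) * c < ln (\<eta> / (U - a))" using c by (simp add: pos_less_divide_eq)
    hence "exp (- c * (t - T)) < \<eta> / (U - a)"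
      using \<eta> aU by (metis exp_less_cancel_iff exp_ln divide_pos_pos diff_gt_0_iff_gt minus_diff_eq
          mult.commute mult_minus_left)
    thus "(U - a) * exp (- c * (t - T)) < \<eta>" using aU by (simp add: pos_less_divide_eq mult.commute)
  qed
  moreover have "eventually (\<lambda>t. T \<le> t) at_top" by (rule eventually_ge_at_top)
  ultimately show ?thesis
  proof eventually_elim
    case (elim t)
    show ?case
    proof
      fix q assume "q \<in> P"
      from barrier_exp_decay[of P T h h' a U C q t, OF fin dh aU C decr init this elim(2), folded c_def]
      show "h q t \<le> a + \<eta>" using elim(1) by linarith
    qed
  qed
qed

lemma eventually_le_of_deriv_le:
  fixes h h' :: "real \<Rightarrow> real"
  assumes dh: "\<And>t. t \<ge> T \<Longrightarrow> (h has_real_derivative h' t) (at t within {T..})"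
    and C: "C > 0" and decr: "\<And>t. t \<ge> T \<Longrightarrow> a \<le> h t \<Longrightarrow> h' t \<le> - C"
    and \<eta>: "\<eta> > 0"
  shows "eventually (\<lambda>t. h t \<le> a + \<eta>) at_top"
proof -
  have "eventually (\<lambda>t. \<forall>q\<in>(UNIV :: unit set). h t \<le> a + \<eta>) at_top"
    by (rule eventually_le_of_decay[where h = "\<lambda>_. h" and h' = "\<lambda>_. h'" and U = "max (h T) a + 1"
          and T = T and C = C]) (use dh decr C \<eta> in auto)
  thus ?thesis by simp
qed

lemma Limsup_le_of_eventually_le:
  assumes "\<And>\<epsilon>. 0 < \<epsilon> \<Longrightarrow> eventually (\<lambda>x. g x \<le> c + \<epsilon>) F"
  shows "Limsup F (\<lambda>x. ereal (g x)) \<le> ereal c"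
  unfolding Limsup_le_iff
proof (intro allI impI)
  fix y :: ereal assume y: "ereal c < y"
  show "eventually (\<lambda>x. ereal (g x) < y) F"
  proof (cases y)
    case (real y')
    hence "c < y'" using y by simp
    have "eventually (\<lambda>x. g x \<le> c + (y' - c) / 2) F" using assms \<open>c < y'\<close> by simp
    thus ?thesis
    proof eventually_elim
      case (elim x)
      hence "g x < y'" using \<open>c < y'\<close> by argo
      thus ?case by (simp add: real)
    qed
  qed (use y in auto)
qed

lemma Liminf_ge_of_eventually_ge:
  assumes "\<And>\<epsilon>. 0 < \<epsilon> \<Longrightarrow> eventually (\<lambda>x. c - \<epsilon> \<le> g x) F"
  shows "ereal c \<le> Liminf F (\<lambda>x. ereal (g x))"
  unfolding le_Liminf_iff
proof (intro allI impI)
  fix y :: ereal assume y: "y < ereal c"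
  show "eventually (\<lambda>x. y < ereal (g x)) F"
  proof (cases y)
    case (real y')
    hence "y' < c" using y by simp
    have "eventually (\<lambda>x. c - (c - y') / 2 \<le> g x) F" using assms \<open>y' < c\<close> by simp
    thus ?thesis
    proof eventually_elim
      case (elim x)
      hence "y' < g x" using \<open>y' < c\<close> by argo
      thus ?case by (simp add: real)
    qed
  qed (use y in auto)
qed

section \<open>Phases and diameters\<close>

lemma ex_nat_bound_2pi:
  assumes "finite A"
  shows "\<exists>n::nat. \<forall>i\<in>A. g i \<le> 2 * pi * real n"
proof -
  obtain n :: nat where n: "(\<Sum>i\<in>A. \<bar>g i\<bar>) / (2 * pi) \<le> real n" using real_arch_simple by blast
  have "g i \<le> 2 * pi * real n" if "i \<in> A" for i
  proof -
    have "g i \<le> (\<Sum>i\<in>A. \<bar>g i\<bar>)" using member_le_sum[OF that _ assms, of "\<lambda>i. \<bar>g i\<bar>"] by auto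
    also have "\<dots> \<le> 2 * pi * real n" using n by (simp add: divide_le_eq mult.commute)
    finally show ?thesis .
  qed
  thus ?thesis by blast
qed

lemma diam_idx_le_iff:
  assumes "finite A" "A \<noteq> {}"
  shows "diam_idx x A \<le> c \<longleftrightarrow> (\<forall>i\<in>A. \<forall>j\<in>A. x i - x j \<le> c)"
proof -
  have "{\<bar>x i - x j\<bar> | i j. i \<in> A \<and> j \<in> A} = (\<lambda>(i,j). \<bar>x i - x j\<bar>) ` (A \<times> A)" by auto
  hence "diam_idx x A \<le> c \<longleftrightarrow> (\<forall>i\<in>A. \<forall>j\<in>A. \<bar>x i - x j\<bar> \<le> c)"
    unfolding diam_idx_def using assms by (subst Max_le_iff) auto
  thus ?thesis by (metis abs_le_iff minus_diff_eq)
qed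

lemma diff_le_diam_idx:
  assumes "finite A" "i \<in> A" "j \<in> A"
  shows "x i - x j \<le> diam_idx x A"
proof -
  have "{\<bar>x i - x j\<bar> | i j. i \<in> A \<and> j \<in> A} = (\<lambda>(i,j). \<bar>x i - x j\<bar>) ` (A \<times> A)" by auto
  hence "\<bar>x i - x j\<bar> \<le> diam_idx x A"
    unfolding diam_idx_def using assms by (auto intro!: Max_ge)
  thus ?thesis by simp
qed

lemma diam_idx_cong: "(\<And>i. i \<in> A \<Longrightarrow> x i = y i) \<Longrightarrow> diam_idx x A = diam_idx y A"
  unfolding diam_idx_def by (metis (no_types, lifting))

lemma kuramoto_solution_shift:
  assumes "kuramoto_solution N \<nu> \<kappa> \<theta>"
  shows "kuramoto_solution N \<nu> \<kappa> (\<lambda>i t. \<theta> i t + 2 * pi * real_of_int (m i))"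
  unfolding kuramoto_solution_def
proof (intro ballI allI impI)
  fix i t assume "i \<in> {1..N}" "(t::real) \<ge> 0"
  hence "(\<theta> i has_real_derivative
      \<nu> i + \<kappa> / real N * (\<Sum>j=1..N. sin (\<theta> j t - \<theta> i t))) (at t within {0..})"
    using assms unfolding kuramoto_solution_def by blast
  hence "((\<lambda>t. \<theta> i t + 2 * pi * real_of_int (m i)) has_real_derivative
      \<nu> i + \<kappa> / real N * (\<Sum>j=1..N. sin (\<theta> j t - \<theta> i t)) + 0) (at t within {0..})"
    by (intro DERIV_add DERIV_const)
  moreover have shift: "sin ((\<theta> j t + 2 * pi * real_of_int (m j)) - (\<theta> i t + 2 * pi * real_of_int (m i)))
      = sin (\<theta> j t - \<theta> i t)" for j
  proof -
    have "(\<theta> j t + 2 * pi * real_of_int (m j)) - (\<theta> i t + 2 * pi * real_of_int (m i))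
        = (\<theta> j t - \<theta> i t) + 2 * pi * real_of_int (m j - m i)"
      by (simp add: algebra_simps)
    thus ?thesis by (simp only: sin_add_2pi_int)
  qed
  ultimately show "((\<lambda>t. \<theta> i t + 2 * pi * real_of_int (m i)) has_real_derivative
      \<nu> i + \<kappa> / real N * (\<Sum>j=1..N. sin ((\<theta> j t + 2 * pi * real_of_int (m j))
        - (\<theta> i t + 2 * pi * real_of_int (m i))))) (at t within {0..})"
    by (simp only: shift add_0_right)
qed

section \<open>Kuramoto ensembles\<close>

locale kuramoto_ensemble =
  fixes N :: nat and \<nu> :: "nat \<Rightarrow> real" and \<kappa> \<gamma> l :: real
    and \<Theta> :: "nat \<Rightarrow> real \<Rightarrow> real" and A B :: "nat set"
  assumes N: "0 < N"
    and AB: "A \<subseteq> B" and BN: "B \<subseteq> {1..N}"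
    and \<gamma>: "1/2 < \<gamma>" "\<gamma> \<le> 1"
    and l: "0 < l" "l < 2 * arccos (1/\<gamma> - 1)"
    and \<kappa>: "diam_idx \<nu> B / f_gamma \<gamma> l < \<kappa>"
    and sol: "kuramoto_solution N \<nu> \<kappa> \<Theta>"
    and ens: "gamma_ensemble N \<gamma> A"
    and init: "diam_idx (\<lambda>i. \<Theta> i 0) A \<le> l"
begin

abbreviation "\<Delta> \<equiv> diam_idx \<nu> B"
abbreviation "\<rho> \<equiv> \<Delta> / \<kappa>"
abbreviation "f \<equiv> f_gamma \<gamma>"
abbreviation "\<phi> \<equiv> phi1 \<gamma> \<kappa> \<Delta>"
abbreviation "\<theta>\<^sub>0 \<equiv> arccos (1/\<gamma> - 1)"
abbreviation "margin \<equiv> \<gamma> * cos \<phi> - (1 - \<gamma>)"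

lemma finite_B: "finite B" using BN finite_subset by blast

lemma finite_A: "finite A" using AB finite_B finite_subset by blast

lemma A_subset: "A \<subseteq> {1..N}" using AB BN by blast

lemma card_A: "\<gamma> * real N \<le> real (card A)"
  using ens N unfolding gamma_ensemble_def by (simp add: le_divide_eq)

lemma A_nonempty: "A \<noteq> {}"
proof
  assume "A = {}"
  hence "\<gamma> * real N \<le> 0" using card_A by simp
  moreover have "0 < \<gamma> * real N" using \<gamma> N by simp
  ultimately show False by simp
qed

lemmas \<theta>\<^sub>0 = arccos_inv_minus_one[OF \<gamma>]

lemma l_lt_pi: "l < pi" using l \<theta>\<^sub>0 by simp

lemma f_l_pos: "0 < f l" using f_gamma_pos[OF \<gamma> l] .

lemma \<Delta>_nonneg: "0 \<le> \<Delta>"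
proof -
  obtain i where "i \<in> B" using A_nonempty AB by blast
  from diff_le_diam_idx[OF finite_B this this] show ?thesis by simp
qed

lemma \<Delta>_lt: "\<Delta> < \<kappa> * f l" using \<kappa> f_l_pos by (simp add: pos_divide_less_eq mult.commute)

lemma \<kappa>_pos: "0 < \<kappa>" using \<kappa> \<Delta>_nonneg f_l_pos by (meson divide_nonneg_pos order.strict_trans1)

lemma \<rho>: "0 \<le> \<rho>" "\<rho> < f l"
  using \<Delta>_nonneg \<kappa>_pos \<Delta>_lt by (auto simp: pos_divide_less_eq mult.commute)

lemmas \<phi> = phi1_root[OF \<gamma> l \<rho>]

lemma f_ge_chord:
  assumes "\<phi> \<le> x" "x \<le> l"
  shows "\<rho> + (f l - \<rho>) * (x - \<phi>) / (l - \<phi>) \<le> f x"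
proof -
  have "concave_on {\<phi>..l} f"
    using concave_on_f_gamma[OF \<gamma>] \<phi> l convex_on_subset[of _ "\<lambda>x. - f x" "{\<phi>..l}"]
    unfolding concave_on_def by auto
  from concave_onD_Icc'[OF this, of x] assms
  have "(f l - f \<phi>) / (l - \<phi>) * (x - \<phi>) + f \<phi> \<le> f x" by simp
  thus ?thesis using \<phi> by (simp add: field_simps)
qed

lemma phase_has_derivative:
  assumes "i \<in> {1..N}" "0 \<le> T" "T \<le> t"
  shows "(\<Theta> i has_real_derivative \<nu> i + \<kappa> / real N * (\<Sum>j=1..N. sin (\<Theta> j t - \<Theta> i t)))
    (at t within {T..})"
proof (rule DERIV_subset)
  show "(\<Theta> i has_real_derivative \<nu> i + \<kappa> / real N * (\<Sum>j=1..N. sin (\<Theta> j t - \<Theta> i t)))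
      (at t within {0..})"
    using sol assms unfolding kuramoto_solution_def by auto
qed (use assms in auto)

definition dphase :: "nat \<Rightarrow> nat \<Rightarrow> real \<Rightarrow> real" where
  "dphase i k t = \<nu> i - \<nu> k + \<kappa> / real N * (\<Sum>j=1..N. sin (\<Theta> j t - \<Theta> i t) - sin (\<Theta> j t - \<Theta> k t))"

lemma phase_diff_has_derivative:
  assumes "i \<in> {1..N}" "k \<in> {1..N}" "0 \<le> T" "T \<le> t"
  shows "((\<lambda>t. \<Theta> i t - \<Theta> k t) has_real_derivative dphase i k t) (at t within {T..})"
proof -
  have "(\<nu> i + \<kappa> / real N * (\<Sum>j=1..N. sin (\<Theta> j t - \<Theta> i t)))
      - (\<nu> k + \<kappa> / real N * (\<Sum>j=1..N. sin (\<Theta> j t - \<Theta> k t))) = dphase i k t"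
    by (simp add: dphase_def sum_subtractf right_diff_distrib)
  thus ?thesis
    using DERIV_diff[OF phase_has_derivative[OF assms(1,3,4)] phase_has_derivative[OF assms(2-4)]]
    by simp
qed

text \<open>Up to multiples of \<open>2\<pi>\<close>, the oscillators of \<open>A\<close> lie on the arc of length \<open>D\<close> from
  \<open>\<Theta> b\<close> to \<open>\<Theta> a\<close>, so the coupling pulls \<open>a\<close> back towards \<open>b\<close>.\<close>
lemma dphase_le_at_arc_edge:
  assumes ab: "a \<in> B" "b \<in> B" and D: "0 \<le> D" "D \<le> pi"
    and edge: "\<Theta> a t - \<Theta> b t = D + 2 * pi * real_of_int n"
    and arc: "\<And>j. j \<in> A \<Longrightarrow>
      2 * pi * real_of_int m \<le> \<Theta> j t - \<Theta> b t \<and> \<Theta> j t - \<Theta> b t \<le> 2 * pi * real_of_int m + D"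
  shows "dphase a b t \<le> \<Delta> - \<kappa> * f D"
proof -
  define \<delta> where "\<delta> j = \<Theta> j t - \<Theta> b t - 2 * pi * real_of_int m" for j
  have "sin (\<Theta> j t - \<Theta> a t) - sin (\<Theta> j t - \<Theta> b t) = sin (\<delta> j - D) - sin (\<delta> j)" for j
  proof -
    have "\<Theta> j t - \<Theta> a t = (\<delta> j - D) + 2 * pi * real_of_int (m - n)"
      "\<Theta> j t - \<Theta> b t = \<delta> j + 2 * pi * real_of_int m"
      using edge by (simp_all add: \<delta>_def algebra_simps)
    thus ?thesis by (simp only: sin_add_2pi_int)
  qed
  hence "(\<Sum>j=1..N. sin (\<Theta> j t - \<Theta> a t) - sin (\<Theta> j t - \<Theta> b t))
      = (\<Sum>j=1..N. sin (\<delta> j - D) - sin (\<delta> j))" by simp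
  also have "\<dots> \<le> - real N * f D"
    by (intro sum_sin_diff_minus_sin_le[OF A_subset D _ card_A]) (auto simp: \<delta>_def dest!: arc)
  finally have "\<kappa> / real N * (\<Sum>j=1..N. sin (\<Theta> j t - \<Theta> a t) - sin (\<Theta> j t - \<Theta> b t))
      \<le> \<kappa> / real N * (- real N * f D)"
    using \<kappa>_pos N by (intro mult_left_mono) auto
  moreover have "\<nu> a - \<nu> b \<le> \<Delta>" by (rule diff_le_diam_idx[OF finite_B ab])
  ultimately show ?thesis using N unfolding dphase_def by simp
qed

lemma arc_invariant:
  assumes "0 \<le> t" "i \<in> A" "j \<in> A"
  shows "\<Theta> i t - \<Theta> j t \<le> l"
proof -
  have "\<Theta> (fst p) t - \<Theta> (snd p) t \<le> l" if "p \<in> A \<times> A" for p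
  proof (rule barrier_le[where h = "\<lambda>p t. \<Theta> (fst p) t - \<Theta> (snd p) t"
        and h' = "\<lambda>p t. dphase (fst p) (snd p) t" and \<beta> = "\<lambda>_. l" and \<beta>' = "\<lambda>_. 0" and T = 0])
    show "finite (A \<times> A)" using finite_A by simp
  next
    fix p and s :: real assume "p \<in> A \<times> A" "0 \<le> s"
    thus "((\<lambda>t. \<Theta> (fst p) t - \<Theta> (snd p) t) has_real_derivative dphase (fst p) (snd p) s)
        (at s within {0..})"
      using A_subset by (intro phase_diff_has_derivative) auto
  next
    fix p and s :: real assume p: "p \<in> A \<times> A" and s: "0 \<le> s"
      and eq: "\<Theta> (fst p) s - \<Theta> (snd p) s = l" and all: "\<forall>q\<in>A \<times> A. \<Theta> (fst q) s - \<Theta> (snd q) s \<le> l"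
    have "dphase (fst p) (snd p) s \<le> \<Delta> - \<kappa> * f l"
    proof (rule dphase_le_at_arc_edge[where n = 0 and m = 0])
      fix j assume "j \<in> A"
      thus "2 * pi * real_of_int 0 \<le> \<Theta> j s - \<Theta> (snd p) s \<and> \<Theta> j s - \<Theta> (snd p) s \<le> 2 * pi * real_of_int 0 + l"
        using all p eq by (force dest: bspec[of _ _ "(fst p, j)"] bspec[of _ _ "(j, snd p)"])
    qed (use p AB eq l l_lt_pi in auto)
    thus "dphase (fst p) (snd p) s < 0" using \<Delta>_lt by simp
  qed (use that assms init diam_idx_le_iff[OF finite_A A_nonempty] in auto)
  thus ?thesis using assms by force
qed

lemma phase_bounded_above:
  assumes k: "k \<in> B"
  shows "\<exists>c. \<forall>t\<ge>0. \<forall>i\<in>A. \<Theta> k t - \<Theta> i t \<le> c"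
proof -
  obtain n :: nat where n: "\<forall>i\<in>A. \<Theta> k 0 - \<Theta> i 0 \<le> 2 * pi * real n"
    using ex_nat_bound_2pi[OF finite_A, of "\<lambda>i. \<Theta> k 0 - \<Theta> i 0"] by blast
  have "\<Theta> k t - \<Theta> i t \<le> l + 2 * pi * real n" if "0 \<le> t" "i \<in> A" for t i
  proof (rule barrier_le[where h = "\<lambda>i t. \<Theta> k t - \<Theta> i t" and h' = "\<lambda>i t. dphase k i t"
        and \<beta> = "\<lambda>_. l + 2 * pi * real n" and \<beta>' = "\<lambda>_. 0" and T = 0 and P = A])
    fix p and s :: real assume "p \<in> A" "0 \<le> s"
    thus "((\<lambda>t. \<Theta> k t - \<Theta> p t) has_real_derivative dphase k p s) (at s within {0..})"
      using A_subset k BN by (intro phase_diff_has_derivative) auto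
  next
    fix p and s :: real assume p: "p \<in> A" and s: "0 \<le> s"
      and eq: "\<Theta> k s - \<Theta> p s = l + 2 * pi * real n"
      and all: "\<forall>q\<in>A. \<Theta> k s - \<Theta> q s \<le> l + 2 * pi * real n"
    have "dphase k p s \<le> \<Delta> - \<kappa> * f l"
    proof (rule dphase_le_at_arc_edge[where n = "int n" and m = 0])
      fix j assume "j \<in> A"
      thus "2 * pi * real_of_int 0 \<le> \<Theta> j s - \<Theta> p s \<and> \<Theta> j s - \<Theta> p s \<le> 2 * pi * real_of_int 0 + l"
        using all eq arc_invariant[OF s _ p] by force
    qed (use p k AB eq l l_lt_pi in auto)
    thus "dphase k p s < 0" using \<Delta>_lt by simp
  qed (use that finite_A n l in auto)
  thus ?thesis by blast
qed

lemma phase_bounded_below: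
  assumes k: "k \<in> B"
  shows "\<exists>c. \<forall>t\<ge>0. \<forall>i\<in>A. \<Theta> i t - \<Theta> k t \<le> c"
proof -
  obtain n :: nat where n: "\<forall>i\<in>A. \<Theta> i 0 - \<Theta> k 0 \<le> 2 * pi * real n"
    using ex_nat_bound_2pi[OF finite_A, of "\<lambda>i. \<Theta> i 0 - \<Theta> k 0"] by blast
  have "\<Theta> i t - \<Theta> k t \<le> l + 2 * pi * real n" if "0 \<le> t" "i \<in> A" for t i
  proof (rule barrier_le[where h = "\<lambda>i t. \<Theta> i t - \<Theta> k t" and h' = "\<lambda>i t. dphase i k t"
        and \<beta> = "\<lambda>_. l + 2 * pi * real n" and \<beta>' = "\<lambda>_. 0" and T = 0 and P = A])
    fix p and s :: real assume "p \<in> A" "0 \<le> s"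
    thus "((\<lambda>t. \<Theta> p t - \<Theta> k t) has_real_derivative dphase p k s) (at s within {0..})"
      using A_subset k BN by (intro phase_diff_has_derivative) auto
  next
    fix p and s :: real assume p: "p \<in> A" and s: "0 \<le> s"
      and eq: "\<Theta> p s - \<Theta> k s = l + 2 * pi * real n"
      and all: "\<forall>q\<in>A. \<Theta> q s - \<Theta> k s \<le> l + 2 * pi * real n"
    have "dphase p k s \<le> \<Delta> - \<kappa> * f l"
    proof (rule dphase_le_at_arc_edge[where n = "int n" and m = "int n"])
      fix j assume "j \<in> A"
      thus "2 * pi * real_of_int (int n) \<le> \<Theta> j s - \<Theta> k s \<and>
          \<Theta> j s - \<Theta> k s \<le> 2 * pi * real_of_int (int n) + l"
        using all eq arc_invariant[OF s p] by force
    qed (use p k AB eq l l_lt_pi in auto)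
    thus "dphase p k s < 0" using \<Delta>_lt by simp
  qed (use that finite_A n l in auto)
  thus ?thesis by blast
qed

lemma bdd_above_diam_B: "bdd_above ((\<lambda>t. diam_idx (\<lambda>i. \<Theta> i t) B) ` {0..})"
proof -
  obtain cu where cu: "\<And>k. k \<in> B \<Longrightarrow> \<forall>t\<ge>0. \<forall>i\<in>A. \<Theta> k t - \<Theta> i t \<le> cu k"
    using finite_set_choice[OF finite_B] phase_bounded_above by metis
  obtain cl where cl: "\<And>k. k \<in> B \<Longrightarrow> \<forall>t\<ge>0. \<forall>i\<in>A. \<Theta> i t - \<Theta> k t \<le> cl k"
    using finite_set_choice[OF finite_B] phase_bounded_below by metis
  obtain i0 where i0: "i0 \<in> A" using A_nonempty by blast
  have "diam_idx (\<lambda>i. \<Theta> i t) B \<le> Max (cu ` B) + Max (cl ` B)" if "0 \<le> t" for t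
  proof (intro diam_idx_le_iff[OF finite_B, THEN iffD2] ballI)
    show "B \<noteq> {}" using i0 AB by blast
    fix k k' assume k: "k \<in> B" "k' \<in> B"
    have "\<Theta> k t - \<Theta> i0 t \<le> cu k" "\<Theta> i0 t - \<Theta> k' t \<le> cl k'"
      using cu[OF k(1)] cl[OF k(2)] that i0 by auto
    moreover have "cu k \<le> Max (cu ` B)" "cl k' \<le> Max (cl ` B)" using k finite_B by auto
    ultimately show "\<Theta> k t - \<Theta> k' t \<le> Max (cu ` B) + Max (cl ` B)" by linarith
  qed
  thus ?thesis unfolding bdd_above_def by blast
qed

lemma dphase_le_contraction:
  assumes a: "\<phi> < a" and ij: "i \<in> A" "j \<in> A"
    and max: "\<forall>p\<in>A \<times> A. \<Theta> (fst p) t - \<Theta> (snd p) t \<le> \<Theta> i t - \<Theta> j t"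
    and D: "a \<le> \<Theta> i t - \<Theta> j t" "\<Theta> i t - \<Theta> j t \<le> l"
  shows "dphase i j t \<le> - (\<kappa> * ((f l - \<rho>) * (a - \<phi>) / (l - \<phi>)))"
proof -
  define D where "D = \<Theta> i t - \<Theta> j t"
  have "dphase i j t \<le> \<Delta> - \<kappa> * f D"
  proof (rule dphase_le_at_arc_edge[where n = 0 and m = 0])
    fix k assume "k \<in> A"
    thus "2 * pi * real_of_int 0 \<le> \<Theta> k t - \<Theta> j t \<and> \<Theta> k t - \<Theta> j t \<le> 2 * pi * real_of_int 0 + D"
      using max ij unfolding D_def by (force dest: bspec[of _ _ "(i, k)"] bspec[of _ _ "(k, j)"])
  qed (use ij AB D a \<phi> l_lt_pi in \<open>auto simp: D_def\<close>)
  moreover have "(f l - \<rho>) * (a - \<phi>) / (l - \<phi>) \<le> (f l - \<rho>) * (D - \<phi>) / (l - \<phi>)"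
    using D \<rho> \<phi> by (intro divide_right_mono mult_left_mono) (auto simp: D_def)
  hence "\<rho> + (f l - \<rho>) * (a - \<phi>) / (l - \<phi>) \<le> f D"
    using f_ge_chord[of D] D a unfolding D_def by linarith
  hence "\<kappa> * (\<rho> + (f l - \<rho>) * (a - \<phi>) / (l - \<phi>)) \<le> \<kappa> * f D"
    using \<kappa>_pos by (intro mult_left_mono) auto
  moreover have "\<kappa> * \<rho> = \<Delta>" using \<kappa>_pos by simp
  ultimately show ?thesis by (simp add: distrib_left)
qed

lemma eventually_diam_le:
  assumes \<epsilon>: "0 < \<epsilon>"
  shows "eventually (\<lambda>t. \<forall>i\<in>A. \<forall>j\<in>A. \<Theta> i t - \<Theta> j t \<le> \<phi> + \<epsilon>) at_top"
proof -
  define a where "a = \<phi> + min (\<epsilon>/2) ((l - \<phi>)/2)"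
  have "0 < min (\<epsilon>/2) ((l - \<phi>)/2)" using \<phi> \<epsilon> by simp
  moreover have "min (\<epsilon>/2) ((l - \<phi>)/2) \<le> \<epsilon>/2" "min (\<epsilon>/2) ((l - \<phi>)/2) \<le> (l - \<phi>)/2"
    by (rule min.cobounded1, rule min.cobounded2)
  ultimately have a: "\<phi> < a" "a < l" "a \<le> \<phi> + \<epsilon>/2" using \<phi> unfolding a_def by argo+
  have "eventually (\<lambda>t. \<forall>p\<in>A \<times> A. \<Theta> (fst p) t - \<Theta> (snd p) t \<le> a + \<epsilon>/2) at_top"
  proof (rule eventually_le_of_decay[where h' = "\<lambda>p t. dphase (fst p) (snd p) t" and T = 0 and U = l
        and C = "\<kappa> * ((f l - \<rho>) * (a - \<phi>) / (l - \<phi>))"])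
    show "finite (A \<times> A)" using finite_A by simp
    show "0 < \<kappa> * ((f l - \<rho>) * (a - \<phi>) / (l - \<phi>))" using \<kappa>_pos \<rho> \<phi> a by simp
  next
    fix p and s :: real assume "p \<in> A \<times> A" "0 \<le> s"
    thus "((\<lambda>t. \<Theta> (fst p) t - \<Theta> (snd p) t) has_real_derivative dphase (fst p) (snd p) s)
        (at s within {0..})"
      using A_subset by (intro phase_diff_has_derivative) auto
  next
    fix p and s :: real assume "p \<in> A \<times> A"
      "\<forall>q\<in>A \<times> A. \<Theta> (fst q) s - \<Theta> (snd q) s \<le> \<Theta> (fst p) s - \<Theta> (snd p) s"
      "a \<le> \<Theta> (fst p) s - \<Theta> (snd p) s" "\<Theta> (fst p) s - \<Theta> (snd p) s \<le> l"
    thus "dphase (fst p) (snd p) s \<le> - (\<kappa> * ((f l - \<rho>) * (a - \<phi>) / (l - \<phi>)))"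
      using a by (intro dphase_le_contraction) auto
  next
    fix q assume "q \<in> A \<times> A"
    thus "\<Theta> (fst q) 0 - \<Theta> (snd q) 0 \<le> l" using arc_invariant[of 0 "fst q" "snd q"] by auto
  qed (use a \<epsilon> in auto)
  thus ?thesis
  proof eventually_elim
    case (elim t)
    show ?case
    proof (intro ballI)
      fix i j assume "i \<in> A" "j \<in> A"
      hence "\<Theta> i t - \<Theta> j t \<le> a + \<epsilon>/2" using elim by force
      thus "\<Theta> i t - \<Theta> j t \<le> \<phi> + \<epsilon>" using a(3) by argo
    qed
  qed
qed

definition cos_sum :: "nat \<Rightarrow> nat \<Rightarrow> real \<Rightarrow> real" where
  "cos_sum i j t = (\<Sum>k=1..N. cos (\<Theta> k t - (\<Theta> i t + \<Theta> j t) / 2))"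

lemma dphase_eq_cos_sum:
  "dphase i j t = \<nu> i - \<nu> j - \<kappa> / real N * (2 * sin ((\<Theta> i t - \<Theta> j t) / 2) * cos_sum i j t)"
proof -
  have "sin (\<Theta> k t - \<Theta> i t) - sin (\<Theta> k t - \<Theta> j t)
      = - (2 * sin ((\<Theta> i t - \<Theta> j t) / 2) * cos (\<Theta> k t - (\<Theta> i t + \<Theta> j t) / 2))" for k
  proof -
    have "((\<Theta> k t - \<Theta> i t) - (\<Theta> k t - \<Theta> j t)) / 2 = - ((\<Theta> i t - \<Theta> j t) / 2)"
      "((\<Theta> k t - \<Theta> i t) + (\<Theta> k t - \<Theta> j t)) / 2 = \<Theta> k t - (\<Theta> i t + \<Theta> j t) / 2"
      by (simp_all add: field_simps)
    with sin_diff_sin[of "\<Theta> k t - \<Theta> i t" "\<Theta> k t - \<Theta> j t"] show ?thesis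
      by (simp only: sin_minus mult_minus_right mult_minus_left)
  qed
  thus ?thesis unfolding dphase_def cos_sum_def by (simp add: sum_distrib_left sum_negf)
qed

lemma cos_sum_le: "cos_sum i j t \<le> real N"
  using sum_mono[of "{1..N}" "\<lambda>k. cos (\<Theta> k t - (\<Theta> i t + \<Theta> j t) / 2)" "\<lambda>_. 1"]
  unfolding cos_sum_def by simp

lemma cos_sum_ge:
  assumes ij: "i \<in> A" "j \<in> A" and E: "0 \<le> E" "E \<le> pi"
    and arc: "\<forall>a\<in>A. \<forall>b\<in>A. \<Theta> a t - \<Theta> b t \<le> E"
  shows "real N * (\<gamma> * cos E - (1 - \<gamma>)) \<le> cos_sum i j t"
proof -
  have fin: "finite {1..N}" by simp
  have cA: "card ({1..N} - A) = N - card A" "card A \<le> N"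
    using A_subset card_mono[OF fin A_subset] by (auto simp: card_Diff_subset finite_subset)
  have "cos E \<le> cos (\<Theta> k t - (\<Theta> i t + \<Theta> j t) / 2)" if k: "k \<in> A" for k
  proof -
    have "\<Theta> k t - \<Theta> i t \<le> E" "\<Theta> i t - \<Theta> k t \<le> E" "\<Theta> k t - \<Theta> j t \<le> E" "\<Theta> j t - \<Theta> k t \<le> E"
      using arc k ij by auto
    hence "\<bar>\<Theta> k t - (\<Theta> i t + \<Theta> j t) / 2\<bar> \<le> E" by (simp add: abs_le_iff field_simps)
    hence "cos E \<le> cos \<bar>\<Theta> k t - (\<Theta> i t + \<Theta> j t) / 2\<bar>" using E by (intro cos_monotone_0_pi_le) auto
    thus ?thesis by simp
  qed
  hence "(\<Sum>k\<in>A. cos E) + (\<Sum>k\<in>{1..N}-A. -1)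
      \<le> (\<Sum>k\<in>A. cos (\<Theta> k t - (\<Theta> i t + \<Theta> j t) / 2))
        + (\<Sum>k\<in>{1..N}-A. cos (\<Theta> k t - (\<Theta> i t + \<Theta> j t) / 2))"
    by (intro add_mono sum_mono) auto
  also have "\<dots> = cos_sum i j t"
    unfolding cos_sum_def by (subst sum.subset_diff[OF A_subset fin]) (simp add: add.commute)
  finally have "real (card A) * (cos E + 1) - real N \<le> cos_sum i j t"
    using cA by (simp add: of_nat_diff algebra_simps)
  moreover have "\<gamma> * real N * (cos E + 1) \<le> real (card A) * (cos E + 1)"
    by (intro mult_right_mono card_A) (use cos_ge_minus_one[of E] in linarith)
  ultimately show ?thesis by (simp add: algebra_simps)
qed

lemma margin_pos: "\<rho> < f \<theta>\<^sub>0 \<Longrightarrow> 0 < margin"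
proof -
  assume "\<rho> < f \<theta>\<^sub>0"
  hence "\<phi> < \<theta>\<^sub>0" using phi1_lt_arccos[OF \<gamma>] \<rho> by blast
  hence "cos \<theta>\<^sub>0 < cos \<phi>" using \<phi> \<theta>\<^sub>0 by (intro cos_monotone_0_pi) auto
  thus ?thesis using \<theta>\<^sub>0(3) \<gamma> mult_strict_left_mono[of "cos \<theta>\<^sub>0" "cos \<phi>" \<gamma>] by simp
qed

lemma margin_perturb:
  assumes "0 \<le> e"
  shows "margin - e \<le> \<gamma> * cos (\<phi> + e) - (1 - \<gamma>)"
proof -
  have "cos \<phi> - e \<le> cos (\<phi> + e)" using cos_diff_le_abs[of \<phi> "\<phi> + e"] assms by simp
  hence "\<gamma> * (cos \<phi> - e) \<le> \<gamma> * cos (\<phi> + e)" using \<gamma> by (intro mult_left_mono) auto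
  moreover have "\<gamma> * e \<le> e" using \<gamma> assms by (simp add: mult_left_le_one_le)
  ultimately show ?thesis by (simp add: right_diff_distrib)
qed

lemma eventually_cos_sum_ge:
  assumes H: "\<rho> < f \<theta>\<^sub>0" and s: "s < margin"
  shows "eventually (\<lambda>t. \<forall>i\<in>A. \<forall>j\<in>A. \<Theta> i t - \<Theta> j t \<le> pi/2 \<and> real N * s \<le> cos_sum i j t) at_top"
proof -
  have "\<phi> < \<theta>\<^sub>0" using phi1_lt_arccos[OF \<gamma>] \<rho> H by blast
  define \<epsilon> where "\<epsilon> = min ((\<theta>\<^sub>0 - \<phi>)/2) (margin - s)"
  have "\<epsilon> \<le> (\<theta>\<^sub>0 - \<phi>)/2" "\<epsilon> \<le> margin - s" unfolding \<epsilon>_def by (rule min.cobounded1, rule min.cobounded2)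
  hence \<epsilon>: "0 < \<epsilon>" "\<phi> + \<epsilon> \<le> pi/2" "s \<le> margin - \<epsilon>"
    using \<open>\<phi> < \<theta>\<^sub>0\<close> s \<theta>\<^sub>0 unfolding \<epsilon>_def by argo+
  have "s \<le> \<gamma> * cos (\<phi> + \<epsilon>) - (1 - \<gamma>)" using margin_perturb[of \<epsilon>] \<epsilon> by simp
  hence Ns: "real N * s \<le> real N * (\<gamma> * cos (\<phi> + \<epsilon>) - (1 - \<gamma>))" by (intro mult_left_mono) auto
  show ?thesis
    using eventually_diam_le[OF \<epsilon>(1)]
  proof eventually_elim
    case (elim t)
    show ?case
    proof (intro ballI conjI)
      fix i j assume ij: "i \<in> A" "j \<in> A"
      show "\<Theta> i t - \<Theta> j t \<le> pi/2" using elim ij \<epsilon>(2) by force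
      have "real N * (\<gamma> * cos (\<phi> + \<epsilon>) - (1 - \<gamma>)) \<le> cos_sum i j t"
        using elim \<epsilon> \<phi> \<theta>\<^sub>0 by (intro cos_sum_ge[OF ij]) auto
      thus "real N * s \<le> cos_sum i j t" using Ns by linarith
    qed
  qed
qed

lemma eventually_phase_diff_le:
  assumes H: "\<rho> < f \<theta>\<^sub>0" and ij: "i \<in> A" "j \<in> A" and b: "0 < b" "b \<le> pi"
    and gap: "(\<nu> i - \<nu> j) / \<kappa> < 2 * sin (b/2) * margin" and \<eta>: "0 < \<eta>"
  shows "eventually (\<lambda>t. \<Theta> i t - \<Theta> j t \<le> b + \<eta>) at_top"
proof -
  define \<sigma> where "\<sigma> = 2 * sin (b/2)"
  define q where "q = (\<nu> i - \<nu> j) / \<kappa>"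
  have \<sigma>: "0 < \<sigma>" unfolding \<sigma>_def using b by (intro mult_pos_pos sin_gt_zero) auto
  have q: "\<nu> i - \<nu> j = \<kappa> * q" using \<kappa>_pos by (simp add: q_def)
  have "q < \<sigma> * margin" using gap by (simp add: q_def \<sigma>_def)
  hence "q / \<sigma> < margin" using \<sigma> by (simp add: pos_divide_less_eq mult.commute)
  define u where "u = max (q / \<sigma>) 0"
  have u: "q / \<sigma> \<le> u" "0 \<le> u" "u < margin"
    using \<open>q / \<sigma> < margin\<close> margin_pos[OF H] by (auto simp: u_def)
  define s where "s = (u + margin) / 2"
  have s: "0 < s" "s < margin" "q / \<sigma> < s" using u unfolding s_def by argo+
  hence qs: "q < \<sigma> * s" using \<sigma> by (simp add: pos_divide_less_eq mult.commute)
  obtain T where T: "\<And>t. T \<le> t \<Longrightarrow> \<forall>i\<in>A. \<forall>j\<in>A. \<Theta> i t - \<Theta> j t \<le> pi/2 \<and> real N * s \<le> cos_sum i j t"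
    using eventually_cos_sum_ge[OF H s(2)] unfolding eventually_at_top_linorder by blast
  show ?thesis
  proof (rule eventually_le_of_deriv_le[where T = "max T 0" and h' = "dphase i j" and C = "\<kappa> * (\<sigma> * s - q)"])
    show "((\<lambda>t. \<Theta> i t - \<Theta> j t) has_real_derivative dphase i j t) (at t within {max T 0..})"
      if "max T 0 \<le> t" for t
      using that ij A_subset by (intro phase_diff_has_derivative) auto
    show "0 < \<kappa> * (\<sigma> * s - q)" using \<kappa>_pos qs by simp
  next
    fix t assume t: "max T 0 \<le> t" and x: "b \<le> \<Theta> i t - \<Theta> j t"
    have "\<Theta> i t - \<Theta> j t \<le> pi/2" "real N * s \<le> cos_sum i j t" using T[of t] t ij by auto
    moreover have "sin (b/2) \<le> sin ((\<Theta> i t - \<Theta> j t)/2)"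
      using x b \<open>\<Theta> i t - \<Theta> j t \<le> pi/2\<close> by (intro sin_monotone_2pi_le) auto
    ultimately have "\<sigma> * (real N * s) \<le> 2 * sin ((\<Theta> i t - \<Theta> j t)/2) * cos_sum i j t"
      using \<sigma> s(1) N unfolding \<sigma>_def by (intro mult_mono) auto
    hence "\<kappa> / real N * (\<sigma> * (real N * s)) \<le> \<kappa> / real N * (2 * sin ((\<Theta> i t - \<Theta> j t)/2) * cos_sum i j t)"
      using \<kappa>_pos by (intro mult_left_mono) auto
    thus "dphase i j t \<le> - (\<kappa> * (\<sigma> * s - q))"
      unfolding dphase_eq_cos_sum q using N by (simp add: right_diff_distrib)
  qed (rule \<eta>)
qed

lemma eventually_phase_diff_ge:
  assumes H: "\<rho> < f \<theta>\<^sub>0" and ij: "i \<in> A" "j \<in> A" and gt: "\<nu> j < \<nu> i"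
    and b: "b < (\<nu> i - \<nu> j) / \<kappa>" and \<eta>: "0 < \<eta>"
  shows "eventually (\<lambda>t. b - \<eta> \<le> \<Theta> i t - \<Theta> j t) at_top"
proof -
  define q where "q = (\<nu> i - \<nu> j) / \<kappa>"
  have q: "\<nu> i - \<nu> j = \<kappa> * q" "max b 0 < q" using \<kappa>_pos gt b by (auto simp: q_def)
  obtain T where T: "\<And>t. T \<le> t \<Longrightarrow> \<forall>i\<in>A. \<forall>j\<in>A. \<Theta> i t - \<Theta> j t \<le> pi/2 \<and> real N * 0 \<le> cos_sum i j t"
    using eventually_cos_sum_ge[OF H margin_pos[OF H]] unfolding eventually_at_top_linorder by blast
  have "eventually (\<lambda>t. \<Theta> j t - \<Theta> i t \<le> - b + \<eta>) at_top"
  proof (rule eventually_le_of_deriv_le[where T = "max T 0" and h' = "dphase j i" and C = "\<kappa> * (q - max b 0)"])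
    show "((\<lambda>t. \<Theta> j t - \<Theta> i t) has_real_derivative dphase j i t) (at t within {max T 0..})"
      if "max T 0 \<le> t" for t
      using that ij A_subset by (intro phase_diff_has_derivative) auto
    show "0 < \<kappa> * (q - max b 0)" using \<kappa>_pos q by simp
  next
    fix t assume t: "max T 0 \<le> t" and yb: "- b \<le> \<Theta> j t - \<Theta> i t"
    define y where "y = \<Theta> j t - \<Theta> i t"
    have y_le: "y \<le> pi/2" "- y \<le> pi/2" and S: "0 \<le> cos_sum j i t"
      using T[of t] t ij by (auto simp: y_def)
    have "- (\<kappa> * max b 0) \<le> \<kappa> / real N * (2 * sin (y / 2) * cos_sum j i t)"
    proof (cases "0 \<le> y")
      case True
      hence "0 \<le> sin (y/2)" using y_le by (intro sin_ge_zero) auto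
      hence "0 \<le> \<kappa> / real N * (2 * sin (y / 2) * cos_sum j i t)"
        using S \<kappa>_pos by (intro mult_nonneg_nonneg) auto
      moreover have "0 \<le> \<kappa> * max b 0" using \<kappa>_pos by simp
      ultimately show ?thesis by linarith
    next
      case False
      have "2 * sin (- y/2) \<le> - y" using sin_x_le_x[of "- y/2"] False by simp
      moreover have "0 \<le> sin (- y/2)" using False y_le by (intro sin_ge_zero) auto
      ultimately have "2 * sin (- y/2) * cos_sum j i t \<le> max b 0 * real N"
        using S cos_sum_le[of j i t] yb False unfolding y_def
        by (intro mult_mono) auto
      hence "\<kappa> / real N * (2 * sin (- y/2) * cos_sum j i t) \<le> \<kappa> / real N * (max b 0 * real N)"
        using \<kappa>_pos by (intro mult_left_mono) auto
      thus ?thesis using N by simp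
    qed
    thus "dphase j i t \<le> - (\<kappa> * (q - max b 0))"
      unfolding dphase_eq_cos_sum y_def using q by (simp add: right_diff_distrib)
  qed (rule \<eta>)
  thus ?thesis by (rule eventually_mono) simp
qed

lemma Limsup_diam_le: "Limsup at_top (\<lambda>t. ereal (diam_idx (\<lambda>i. \<Theta> i t) A)) \<le> ereal \<phi>"
proof (rule Limsup_le_of_eventually_le)
  fix \<epsilon> :: real assume "0 < \<epsilon>"
  from eventually_diam_le[OF this]
  show "eventually (\<lambda>t. diam_idx (\<lambda>i. \<Theta> i t) A \<le> \<phi> + \<epsilon>) at_top"
    by (rule eventually_mono) (simp add: diam_idx_le_iff[OF finite_A A_nonempty])
qed

lemma Liminf_phase_diff_ge:
  assumes H: "\<rho> < f \<theta>\<^sub>0" and ij: "i \<in> A" "j \<in> A" and gt: "\<nu> j < \<nu> i"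
  shows "ereal ((\<nu> i - \<nu> j) / \<kappa>) \<le> Liminf at_top (\<lambda>t. ereal (\<Theta> i t - \<Theta> j t))"
proof (rule Liminf_ge_of_eventually_ge)
  fix \<epsilon> :: real assume "0 < \<epsilon>"
  thus "eventually (\<lambda>t. (\<nu> i - \<nu> j) / \<kappa> - \<epsilon> \<le> \<Theta> i t - \<Theta> j t) at_top"
    using eventually_phase_diff_ge[OF H ij gt, of "(\<nu> i - \<nu> j) / \<kappa> - \<epsilon>/2" "\<epsilon>/2"] by simp
qed

text \<open>The factor \<open>\<pi> / (2 \<surd>2)\<close> comes from Jordan's inequality \<open>sin z \<ge> 2 \<surd>2 z / \<pi>\<close> on
  \<open>[0, \<pi>/4]\<close>, applied to the attraction \<open>2 sin (b/2) margin\<close> of a pair at distance \<open>b\<close>.\<close>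
lemma Limsup_phase_diff_le:
  assumes H: "\<rho> < f \<theta>\<^sub>0" and ij: "i \<in> A" "j \<in> A" and gt: "\<nu> j < \<nu> i"
  shows "Limsup at_top (\<lambda>t. ereal (\<Theta> i t - \<Theta> j t))
    \<le> ereal (pi / (2 * sqrt 2 * margin) * ((\<nu> i - \<nu> j) / \<kappa>))"
proof -
  define K where "K = pi / (2 * sqrt 2 * margin) * ((\<nu> i - \<nu> j) / \<kappa>)"
  have m: "0 < margin" by (rule margin_pos[OF H])
  have K: "0 < K" unfolding K_def using m gt \<kappa>_pos by (intro mult_pos_pos divide_pos_pos) auto
  have "2 * sqrt 2 / pi * (pi / (2 * sqrt 2 * M) * x) * M = x" if "M \<noteq> 0" for M x :: real
    using that by (simp add: field_simps)
  hence K_eq: "2 * sqrt 2 / pi * K * margin = (\<nu> i - \<nu> j) / \<kappa>" unfolding K_def using m by simp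
  have "Limsup at_top (\<lambda>t. ereal (\<Theta> i t - \<Theta> j t)) \<le> ereal K"
  proof (rule Limsup_le_of_eventually_le)
    fix \<epsilon> :: real assume \<epsilon>: "0 < \<epsilon>"
    show "eventually (\<lambda>t. \<Theta> i t - \<Theta> j t \<le> K + \<epsilon>) at_top"
    proof (cases "\<phi> < K + \<epsilon>")
      case True
      from eventually_diam_le[of "K + \<epsilon> - \<phi>"] True ij show ?thesis
        by (auto elim!: eventually_mono)
    next
      case False
      define b where "b = K + \<epsilon>/2"
      have "\<phi> < \<theta>\<^sub>0" using phi1_lt_arccos[OF \<gamma>] \<rho> H by blast
      hence b: "0 < b" "b \<le> pi/2" "K < b" using K \<epsilon> False \<theta>\<^sub>0 \<phi> unfolding b_def by argo+
      have "2 * sqrt 2 / pi * K < 2 * sqrt 2 / pi * b" using b by (intro mult_strict_left_mono) auto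
      hence "(\<nu> i - \<nu> j) / \<kappa> < 2 * sqrt 2 / pi * b * margin"
        unfolding K_eq[symmetric] using m by (intro mult_strict_right_mono)
      also have "\<dots> = 2 * (2 * sqrt 2 / pi * (b/2)) * margin" by simp
      also have "\<dots> \<le> 2 * sin (b/2) * margin"
        using sin_ge_chord_pi4[of "b/2"] b m by (intro mult_right_mono) auto
      finally have "eventually (\<lambda>t. \<Theta> i t - \<Theta> j t \<le> b + \<epsilon>/2) at_top"
        using b \<epsilon> by (intro eventually_phase_diff_le[OF H ij]) auto
      thus ?thesis by (simp add: b_def add.commute)
    qed
  qed
  thus ?thesis by (simp add: K_def)
qed

lemma phase_diff_tendsto_zero:
  assumes H: "\<rho> < f \<theta>\<^sub>0" and ij: "i \<in> A" "j \<in> A" and eq: "\<nu> i = \<nu> j"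
  shows "((\<lambda>t. \<Theta> i t - \<Theta> j t) \<longlongrightarrow> 0) at_top"
proof -
  have side: "eventually (\<lambda>t. \<Theta> a t - \<Theta> c t \<le> \<epsilon>/2) at_top"
    if "a \<in> A" "c \<in> A" "\<nu> a = \<nu> c" "0 < \<epsilon>" for a c \<epsilon>
  proof -
    define b where "b = min (\<epsilon>/4) 1"
    have b: "0 < b" "b \<le> \<epsilon>/4" "b \<le> pi" using that pi_gt3 by (auto simp: b_def)
    have "0 < sin (b/2)" using b by (intro sin_gt_zero) auto
    hence "(\<nu> a - \<nu> c) / \<kappa> < 2 * sin (b/2) * margin" using that margin_pos[OF H] by simp
    hence "eventually (\<lambda>t. \<Theta> a t - \<Theta> c t \<le> b + \<epsilon>/4) at_top"
      using b that by (intro eventually_phase_diff_le[OF H]) auto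
    thus ?thesis using b by (auto elim!: eventually_mono)
  qed
  show ?thesis unfolding tendsto_iff
  proof (intro allI impI)
    fix \<epsilon> :: real assume "0 < \<epsilon>"
    with side[OF ij eq] side[OF ij(2,1) eq[symmetric]]
    have "eventually (\<lambda>t. \<Theta> i t - \<Theta> j t \<le> \<epsilon>/2) at_top"
      "eventually (\<lambda>t. \<Theta> j t - \<Theta> i t \<le> \<epsilon>/2) at_top" by blast+
    thus "eventually (\<lambda>t. dist (\<Theta> i t - \<Theta> j t) 0 < \<epsilon>) at_top"
    proof eventually_elim
      case (elim t)
      thus ?case using \<open>0 < \<epsilon>\<close> unfolding dist_real_def by argo
    qed
  qed
qed

lemma diam_A_le: "0 \<le> t \<Longrightarrow> diam_idx (\<lambda>i. \<Theta> i t) A \<le> l"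
  using diam_idx_le_iff[OF finite_A A_nonempty] arc_invariant by blast

end

theorem theorem3p1:
  fixes N :: nat and \<nu> :: "nat \<Rightarrow> real" and \<kappa> \<gamma> l :: real
    and \<theta> :: "nat \<Rightarrow> real \<Rightarrow> real" and A B :: "nat set" and m :: "nat \<Rightarrow> int"
  assumes N: "N \<ge> 2"
    and AB: "A \<subseteq> B" and BN: "B \<subseteq> {1..N}"
    and \<gamma>: "1/2 < \<gamma>" "\<gamma> \<le> 1"
    and l: "0 < l" "l < 2 * arccos (1/\<gamma> - 1)"
    and \<kappa>: "\<kappa> > diam_idx \<nu> B / (\<gamma> * sin l - 2 * (1 - \<gamma>) * sin (l / 2))"
    and sol: "kuramoto_solution N \<nu> \<kappa> \<theta>"
    and ens: "gamma_ensemble N \<gamma> A"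
    and arc: "diam_idx (\<lambda>i. \<theta> i 0 + 2 * pi * real_of_int (m i)) A \<le> l"
  shows
    "let \<theta>' = (\<lambda>i t. if i \<in> A then \<theta> i t + 2 * pi * real_of_int (m i) else \<theta> i t);
         \<phi>\<^sub>1 = phi1 \<gamma> \<kappa> (diam_idx \<nu> B)
     in (\<forall>t\<ge>0. diam_idx (\<lambda>i. \<theta>' i t) A \<le> l)
      \<and> Limsup at_top (\<lambda>t. ereal (diam_idx (\<lambda>i. \<theta>' i t) A)) \<le> ereal \<phi>\<^sub>1
      \<and> bdd_above ((\<lambda>t. diam_idx (\<lambda>i. \<theta>' i t) B) ` {0..})
      \<and> (diam_idx \<nu> B / \<kappa> < (2 * \<gamma> - 1) powr (3/2) / sqrt (2 * \<gamma>)
                              * ((2 - \<gamma>) / (sqrt (\<gamma> / 2) + (1 - \<gamma>)))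
         \<longrightarrow> (\<forall>i\<in>A. \<forall>j\<in>A.
               (\<nu> i > \<nu> j \<longrightarrow>
                  ereal ((\<nu> i - \<nu> j) / \<kappa>) \<le> Liminf at_top (\<lambda>t. ereal (\<theta>' i t - \<theta>' j t))
                \<and> Liminf at_top (\<lambda>t. ereal (\<theta>' i t - \<theta>' j t))
                    \<le> Limsup at_top (\<lambda>t. ereal (\<theta>' i t - \<theta>' j t))
                \<and> Limsup at_top (\<lambda>t. ereal (\<theta>' i t - \<theta>' j t))
                    \<le> ereal (pi / (2 * sqrt 2 * (\<gamma> * cos \<phi>\<^sub>1 - (1 - \<gamma>))) * ((\<nu> i - \<nu> j) / \<kappa>)))
             \<and> (\<nu> i = \<nu> j \<longrightarrow> ((\<lambda>t. \<theta>' i t - \<theta>' j t) \<longlongrightarrow> 0) at_top)))"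
proof -
  define m' where "m' i = (if i \<in> A then m i else 0)" for i
  define \<Theta> where "\<Theta> i t = \<theta> i t + 2 * pi * real_of_int (m' i)" for i t
  have \<Theta>_eq: "(\<lambda>i t. if i \<in> A then \<theta> i t + 2 * pi * real_of_int (m i) else \<theta> i t) = \<Theta>"
    by (auto simp: \<Theta>_def m'_def fun_eq_iff)
  interpret kuramoto_ensemble N \<nu> \<kappa> \<gamma> l \<Theta> A B
  proof
    show "diam_idx \<nu> B / f_gamma \<gamma> l < \<kappa>" using \<kappa> by (simp add: f_gamma_def)
    show "kuramoto_solution N \<nu> \<kappa> \<Theta>" unfolding \<Theta>_def by (rule kuramoto_solution_shift[OF sol])
    have "diam_idx (\<lambda>i. \<Theta> i 0) A = diam_idx (\<lambda>i. \<theta> i 0 + 2 * pi * real_of_int (m i)) A"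
      by (rule diam_idx_cong) (simp add: \<Theta>_def m'_def)
    thus "diam_idx (\<lambda>i. \<Theta> i 0) A \<le> l" using arc by simp
  qed (use assms in auto)
  have H: "diam_idx \<nu> B / \<kappa> < (2 * \<gamma> - 1) powr (3/2) / sqrt (2 * \<gamma>)
      * ((2 - \<gamma>) / (sqrt (\<gamma> / 2) + (1 - \<gamma>))) \<Longrightarrow> \<rho> < f \<theta>\<^sub>0"
    by (simp add: f_gamma_arccos[OF \<gamma>])
  show ?thesis
    unfolding Let_def \<Theta>_eq
    using diam_A_le Limsup_diam_le bdd_above_diam_B Liminf_phase_diff_ge[OF H]
      Limsup_phase_diff_le[OF H] phase_diff_tendsto_zero[OF H]
    by (simp add: Liminf_le_Limsup)
qed

end
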